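(* On the event described in Lemma 2.4 (namely: (a) whenever $p_j$ and $a_i$ interview each other, $i\le j+8\log n$; and (b) whenever the algorithm considers a proposal to $p_j$, all $p_{j'}$ with $j'<\min(j,n-8\log n)$ are matched), for every $k\in[n]$ and at every point of the execution of the Adaptive Algorithm, the current matching $\mu$ satisfies $$\big|\{(a_i,p_j)\in\mu : i\ge k,\ j<k\}\big|\le 8\log n.$$
   Context: Logarithms are base 2. Model. Let $A=\{a_1,\dots,a_n\}$ be a set of applicants and $P=\{p_1,\dots,p_n\}$ a set of positions. Each applicant $a_i$ has a publicly known value $u_i\in\mathbb R$ and each position $p_j$ a publicly known value $v_j\in\mathbb R$, indexed so that $u_1\ge u_2\ge\dots\ge u_n$ and $v_1\ge v_2\ge\dots\ge v_n$. The random variables $\epsilon^A_{ij}$, $\epsilon^P_{ji}$ ($i,j\in[n]$) are mutually independent and identically distributed according to a known distribution symmetric about $0$ (mean zero). The utility of $a_i$ for $p_j$ is $v_j+\epsilon^A_{ij}$ and the utility of $p_j$ for $a_i$ is $u_i+\epsilon^P_{ji}$; the values $\epsilon^A_{ij},\epsilon^P_{ji}$ become known only when $a_i$ and $p_j$ interview each other. The observed utility $v^o_{ij}$ of $a_i$ for $p_j$ equals $v_j+\epsilon^A_{ij}$ if $a_i,p_j$ have interviewed and $v_j$ otherwise; $u^o_{ji}$ is defined symmetrically ($u_i+\epsilon^P_{ji}$ or $u_i$). Write $p_j\succ_{a_i}p_{j'}$ iff $v^o_{ij}>v^o_{ij'}$ and $a_i\succ_{p_j}a_{i'}$ iff $u^o_{ji}>u^o_{ji'}$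 (ties broken in favor of the smaller index); every agent prefers any partner to being unmatched. For a matching $\mu$, $\mu(x)$ denotes the partner of $x$ ($\emptyset$ if unmatched). Adaptive Algorithm. Initially all agents are unmatched and $v^o_{ij}=v_j$, $u^o_{ji}=u_i$ for all $i,j$. For an unmatched applicant $a$, let $\beta(a)$ be $a$'s most preferred position (w.r.t. current observed utilities) that has not yet rejected $a$. While some applicant is unmatched: let $j^*$ be the smallest index such that $\beta(a_i)=p_{j^*}$ for some unmatched $a_i$; let $a_{i^*}$ be $p_{j^*}$'s favorite applicant among $\{a_i:\beta(a_i)=p_{j^*},\mu(a_i)=\emptyset\}$. If $a_{i^*},p_{j^*}$ have not interviewed and ($i^*\le j^*$ or $a_{i^*}\succ_{p_{j^*}}\mu(p_{j^*})$), then they interview and $v^o_{i^*j^*},u^o_{j^*i^*}$ are updated. Otherwise: if $\mu(p_{j^*})\succ_{p_{j^*}}a_{i^*}$, then $p_{j^*}$ rejects $a_{i^*}$; else $p_{j^*}$ rejects $\mu(p_{j^*})$ (if nonempty) and $a_{i^*},p_{j^*}$ become matched. When all applicants are matched, output $\mu$. *)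

theory Defs
  imports Complex_Main
begin

text \<open>Applicants a_1..a_n and positions p_1..p_n are represented by their indices in {1..n}.
  Parameters: n, applicant values u, position values v, noise terms
  eA i j (epsilon^A_{ij}) and eP j i (epsilon^P_{ji}).
  The execution of the Adaptive Algorithm is deterministic once the noise is realized.\<close>

record state =
  muA :: "nat \<Rightarrow> nat option"
  muP :: "nat \<Rightarrow> nat option"
  interviewed :: "(nat \<times> nat) set"
  rejected :: "(nat \<times> nat) set"      (* pairs (i,j): p_j has rejected a_i *)

definition init_state :: state where
  "init_state = \<lparr>muA = (\<lambda>_. None), muP = (\<lambda>_. None), interviewed = {}, rejected = {}\<rparr>"

definition vo :: "(nat \<Rightarrow> real) \<Rightarrow> (nat \<Rightarrow> nat \<Rightarrow> real) \<Rightarrow> state \<Rightarrow> nat \<Rightarrow> nat \<Rightarrow> real" where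
  "vo v eA s i j = v j + (if (i, j) \<in> interviewed s then eA i j else 0)"

definition uo :: "(nat \<Rightarrow> real) \<Rightarrow> (nat \<Rightarrow> nat \<Rightarrow> real) \<Rightarrow> state \<Rightarrow> nat \<Rightarrow> nat \<Rightarrow> real" where
  "uo u eP s j i = u i + (if (i, j) \<in> interviewed s then eP j i else 0)"

definition prefA where
  "prefA v eA s i j j' \<longleftrightarrow> vo v eA s i j > vo v eA s i j' \<or> (vo v eA s i j = vo v eA s i j' \<and> j < j')"

definition prefP where
  "prefP u eP s j i i' \<longleftrightarrow> uo u eP s j i > uo u eP s j i' \<or> (uo u eP s j i = uo u eP s j i' \<and> i < i')"

definition avail :: "nat \<Rightarrow> state \<Rightarrow> nat \<Rightarrow> nat set" where
  "avail n s i = {j \<in> {1..n}. (i, j) \<notin> rejected s}"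

definition beta where
  "beta n v eA s i = (if avail n s i = {} then None
     else Some (THE j. j \<in> avail n s i \<and> (\<forall>j'\<in>avail n s i. j' \<noteq> j \<longrightarrow> prefA v eA s i j j')))"

definition unmatched :: "nat \<Rightarrow> state \<Rightarrow> nat set" where
  "unmatched n s = {i \<in> {1..n}. muA s i = None}"

definition proposers where
  "proposers n v eA s = {i \<in> unmatched n s. beta n v eA s i \<noteq> None}"

definition jstar where
  "jstar n v eA s = Min ((\<lambda>i. the (beta n v eA s i)) ` proposers n v eA s)"

definition cands where
  "cands n v eA s = {i \<in> proposers n v eA s. beta n v eA s i = Some (jstar n v eA s)}"

definition istar where
  "istar n u v eA eP s = (THE i. i \<in> cands n v eA s \<and>
     (\<forall>i'\<in>cands n v eA s. i' \<noteq> i \<longrightarrow> prefP u eP s (jstar n v eA s) i i'))"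

definition beats_partner where
  "beats_partner u eP s j i = (case muP s j of None \<Rightarrow> True | Some i' \<Rightarrow> prefP u eP s j i i')"

definition partner_beats where
  "partner_beats u eP s j i = (case muP s j of None \<Rightarrow> False | Some i' \<Rightarrow> prefP u eP s j i' i)"

definition considers_proposal where
  "considers_proposal n v eA s \<longleftrightarrow> unmatched n s \<noteq> {} \<and> proposers n v eA s \<noteq> {}"

definition step where
  "step n u v eA eP s =
    (if \<not> considers_proposal n v eA s then s else
     (let j = jstar n v eA s; i = istar n u v eA eP s in
      if (i, j) \<notin> interviewed s \<and> (i \<le> j \<or> beats_partner u eP s j i)
      then s\<lparr>interviewed := insert (i, j) (interviewed s)\<rparr>
      else if partner_beats u eP s j i
      then s\<lparr>rejected := insert (i, j) (rejected s)\<rparr>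
      else (case muP s j of
              None \<Rightarrow> s\<lparr>muA := (muA s)(i := Some j), muP := (muP s)(j := Some i)\<rparr>
            | Some i' \<Rightarrow> s\<lparr>muA := (muA s)(i' := None, i := Some j),
                          muP := (muP s)(j := Some i),
                          rejected := insert (i', j) (rejected s)\<rparr>)))"

text \<open>State after k iterations; the points of the execution are exactly run ... k, k \<in> nat.\<close>
definition run where
  "run n u v eA eP k = (step n u v eA eP ^^ k) init_state"

definition event_a where
  "event_a n u v eA eP \<longleftrightarrow> (\<forall>k. \<forall>(i, j) \<in> interviewed (run n u v eA eP k).
       real i \<le> real j + 8 * log 2 (real n))"

definition event_b where
  "event_b n u v eA eP \<longleftrightarrow> (\<forall>k. let s = run n u v eA eP k in
       considers_proposal n v eA s \<longrightarrow>
       (\<forall>j'\<in>{1..n}. real j' < min (real (jstar n v eA s)) (real n - 8 * log 2 (real n))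
            \<longrightarrow> muP s j' \<noteq> None))"

end

theory Submission
  imports Defs
begin

text \<open>Only part (a) of the event is needed. Throughout the run every matched pair has
  interviewed, so a matched pair \<open>(a\<^sub>i, p\<^sub>j)\<close> with \<open>j < k \<le> i\<close> satisfies
  \<open>k - 8 log n \<le> i - 8 log n \<le> j < k\<close>. Distinct matched pairs have distinct positions, hence
  there are at most \<open>8 log n\<close> of them.\<close>

lemma finite_strict_total_has_top:
  assumes "finite C" "C \<noteq> {}"
    and total: "\<And>x y. x \<noteq> y \<Longrightarrow> R x y \<or> R y x"
    and trans: "\<And>x y z. R x y \<Longrightarrow> R y z \<Longrightarrow> R x z"
  shows "\<exists>t\<in>C. \<forall>y\<in>C. y \<noteq> t \<longrightarrow> R t y"
  using assms(1,2)
proof (induction C rule: finite_ne_induct)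
  case (singleton x)
  then show ?case by auto
next
  case (insert x F)
  then obtain t where t: "t \<in> F" "\<forall>y\<in>F. y \<noteq> t \<longrightarrow> R t y" by auto
  show ?case
  proof (cases "R x t")
    case True
    then show ?thesis using t trans by (metis insertCI insertE)
  next
    case False
    moreover have "x \<noteq> t" using t insert.hyps(3) by blast
    ultimately have "R t x" using total by blast
    then show ?thesis using t by auto
  qed
qed

lemma prefP_total: "i \<noteq> i' \<Longrightarrow> prefP u eP s j i i' \<or> prefP u eP s j i' i"
  unfolding prefP_def by auto

lemma prefP_asym: "prefP u eP s j i i' \<Longrightarrow> \<not> prefP u eP s j i' i"
  unfolding prefP_def by auto

lemma prefP_trans: "prefP u eP s j a b \<Longrightarrow> prefP u eP s j b c \<Longrightarrow> prefP u eP s j a c"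
  unfolding prefP_def by auto

lemma finite_cands: "finite (cands n v eA s)"
  unfolding cands_def proposers_def unmatched_def by auto

lemma cands_nonempty:
  assumes "considers_proposal n v eA s"
  shows "cands n v eA s \<noteq> {}"
proof -
  have "finite (proposers n v eA s)" "proposers n v eA s \<noteq> {}"
    using assms unfolding considers_proposal_def proposers_def unmatched_def by auto
  then have "jstar n v eA s \<in> (\<lambda>i. the (beta n v eA s i)) ` proposers n v eA s"
    unfolding jstar_def by (intro Min_in) auto
  then obtain i where "i \<in> proposers n v eA s" "the (beta n v eA s i) = jstar n v eA s"
    by auto
  then have "i \<in> cands n v eA s"
    unfolding cands_def proposers_def by auto
  then show ?thesis by auto
qed

lemma istar_in_cands:
  assumes "considers_proposal n v eA s"
  shows "istar n u v eA eP s \<in> cands n v eA s"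
proof -
  let ?C = "cands n v eA s" and ?R = "prefP u eP s (jstar n v eA s)"
  obtain t where t: "t \<in> ?C" "\<forall>y\<in>?C. y \<noteq> t \<longrightarrow> ?R t y"
    using finite_strict_total_has_top[of ?C ?R] finite_cands cands_nonempty[OF assms]
      prefP_total prefP_trans by blast
  have "\<exists>!i. i \<in> ?C \<and> (\<forall>i'\<in>?C. i' \<noteq> i \<longrightarrow> ?R i i')"
  proof (rule ex1I[of _ t])
    show "t \<in> ?C \<and> (\<forall>i'\<in>?C. i' \<noteq> t \<longrightarrow> ?R t i')" using t by auto
  next
    fix i assume "i \<in> ?C \<and> (\<forall>i'\<in>?C. i' \<noteq> i \<longrightarrow> ?R i i')"
    then show "i = t" using t prefP_asym by metis
  qed
  from theI'[OF this] show ?thesis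
    unfolding istar_def by blast
qed

lemma istar_unmatched:
  assumes "considers_proposal n v eA s"
  shows "muA s (istar n u v eA eP s) = None"
  using istar_in_cands[OF assms] unfolding cands_def proposers_def unmatched_def by auto

definition valid_matching :: "state \<Rightarrow> bool" where
  "valid_matching s \<longleftrightarrow> (\<forall>i j. muA s i = Some j \<longleftrightarrow> muP s j = Some i) \<and>
     (\<forall>i j. muA s i = Some j \<longrightarrow> (i, j) \<in> interviewed s)"

lemma valid_matching_init: "valid_matching init_state"
  unfolding valid_matching_def init_state_def by auto

lemma valid_matching_interview:
  "valid_matching s \<Longrightarrow> valid_matching (s\<lparr>interviewed := insert p (interviewed s)\<rparr>)"
  unfolding valid_matching_def by auto

lemma valid_matching_reject:
  "valid_matching s \<Longrightarrow> valid_matching (s\<lparr>rejected := insert p (rejected s)\<rparr>)"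
  unfolding valid_matching_def by auto

lemma valid_matching_assign:
  assumes valid: "valid_matching s" and unmatched: "muA s i = None"
    and interviewed: "(i, j) \<in> interviewed s"
  shows "valid_matching (case muP s j of
              None \<Rightarrow> s\<lparr>muA := (muA s)(i := Some j), muP := (muP s)(j := Some i)\<rparr>
            | Some i' \<Rightarrow> s\<lparr>muA := (muA s)(i' := None, i := Some j),
                          muP := (muP s)(j := Some i),
                          rejected := insert (i', j) (rejected s)\<rparr>)"
proof -
  have inverse: "\<And>x y. muA s x = Some y \<longleftrightarrow> muP s y = Some x"
    and matched_interviewed: "\<And>x y. muA s x = Some y \<Longrightarrow> (x, y) \<in> interviewed s"
    using valid unfolding valid_matching_def by auto
  have i_free: "muP s y \<noteq> Some i" for y
    using inverse[of i y] unmatched by simp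
  have muP_inj: "y = y'" if "muP s y = Some x" "muP s y' = Some x" for x y y'
    using that inverse by (metis option.inject)
  show ?thesis
  proof (cases "muP s j")
    case None
    then show ?thesis
      using i_free interviewed
      by (auto simp: valid_matching_def inverse matched_interviewed)
  next
    case (Some i')
    then have "i \<noteq> i'" using i_free by blast
    with Some show ?thesis
      using i_free interviewed muP_inj
      by (auto simp: valid_matching_def inverse matched_interviewed)
  qed
qed

text \<open>Without an interview the interview test fails only if the current partner is
  strictly preferred, and then the proposer is rejected rather than matched.\<close>

lemma matched_after_interview:
  assumes "\<not> ((i, j) \<notin> interviewed s \<and> (i \<le> j \<or> beats_partner u eP s j i))"
    and "\<not> partner_beats u eP s j i" and "muA s i = None" and "valid_matching s"
  shows "(i, j) \<in> interviewed s"
proof (rule ccontr)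
  assume not_interviewed: "(i, j) \<notin> interviewed s"
  show False
  proof (cases "muP s j")
    case None
    then show False using assms(1) not_interviewed unfolding beats_partner_def by auto
  next
    case (Some i')
    then have "i \<noteq> i'"
      using assms(3,4) unfolding valid_matching_def by (metis option.simps(3))
    moreover have "\<not> prefP u eP s j i i'" "\<not> prefP u eP s j i' i"
      using assms(1,2) not_interviewed Some
      unfolding beats_partner_def partner_beats_def by auto
    ultimately show False using prefP_total by blast
  qed
qed

lemma valid_matching_step:
  assumes valid: "valid_matching s"
  shows "valid_matching (step n u v eA eP s)"
proof (cases "considers_proposal n v eA s")
  case False
  then show ?thesis using valid unfolding step_def by simp
next
  case proposal: True
  define j where "j = jstar n v eA s"
  define i where "i = istar n u v eA eP s"
  have unmatched: "muA s i = None"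
    unfolding i_def using istar_unmatched[OF proposal] .
  have step_eq: "step n u v eA eP s =
    (if (i, j) \<notin> interviewed s \<and> (i \<le> j \<or> beats_partner u eP s j i)
     then s\<lparr>interviewed := insert (i, j) (interviewed s)\<rparr>
     else if partner_beats u eP s j i
     then s\<lparr>rejected := insert (i, j) (rejected s)\<rparr>
     else (case muP s j of
              None \<Rightarrow> s\<lparr>muA := (muA s)(i := Some j), muP := (muP s)(j := Some i)\<rparr>
            | Some i' \<Rightarrow> s\<lparr>muA := (muA s)(i' := None, i := Some j),
                          muP := (muP s)(j := Some i),
                          rejected := insert (i', j) (rejected s)\<rparr>))"
    using proposal unfolding step_def Let_def i_def j_def by simp
  consider (interview) "(i, j) \<notin> interviewed s \<and> (i \<le> j \<or> beats_partner u eP s j i)"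
    | (reject) "\<not> ((i, j) \<notin> interviewed s \<and> (i \<le> j \<or> beats_partner u eP s j i))"
        "partner_beats u eP s j i"
    | (assign) "\<not> ((i, j) \<notin> interviewed s \<and> (i \<le> j \<or> beats_partner u eP s j i))"
        "\<not> partner_beats u eP s j i"
    by blast
  then show ?thesis
  proof cases
    case interview
    show ?thesis
      unfolding step_eq if_P[OF interview] by (rule valid_matching_interview[OF valid])
  next
    case reject
    show ?thesis
      unfolding step_eq if_not_P[OF reject(1)] if_P[OF reject(2)]
      by (rule valid_matching_reject[OF valid])
  next
    case assign
    then have "(i, j) \<in> interviewed s"
      using matched_after_interview unmatched valid by blast
    then show ?thesis
      unfolding step_eq if_not_P[OF assign(1)] if_not_P[OF assign(2)]
      by (rule valid_matching_assign[OF valid unmatched])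
  qed
qed

lemma valid_matching_run: "valid_matching (run n u v eA eP t)"
  unfolding run_def
  by (induction t) (auto simp: valid_matching_init valid_matching_step)

lemma card_crossing_pairs_le:
  fixes S :: "(nat \<times> nat) set" and L :: real
  assumes "inj_on snd S" "L \<ge> 0"
    and "\<And>i j. (i, j) \<in> S \<Longrightarrow> j < k \<and> k \<le> i \<and> real i \<le> real j + L"
  shows "real (card S) \<le> L"
proof -
  define m where "m = nat \<lfloor>L\<rfloor>"
  have "snd ` S \<subseteq> {k - m..<k}"
  proof
    fix j assume "j \<in> snd ` S"
    then obtain i where "(i, j) \<in> S" by auto
    then have "j < k" "real k - real j \<le> L" using assms(3) by force+
    then have "int k - int j \<le> \<lfloor>L\<rfloor>" by (simp add: le_floor_iff)
    then show "j \<in> {k - m..<k}"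
      unfolding m_def using \<open>j < k\<close> assms(2) by auto
  qed
  then have "card (snd ` S) \<le> card {k - m..<k}"
    by (intro card_mono) auto
  then have "card S \<le> m"
    using assms(1) by (simp add: card_image)
  then show ?thesis
    unfolding m_def using assms(2) by linarith
qed

theorem claim2p5:
  fixes n :: nat and u v :: "nat \<Rightarrow> real" and eA eP :: "nat \<Rightarrow> nat \<Rightarrow> real"
  assumes "\<And>i i'. 1 \<le> i \<Longrightarrow> i \<le> i' \<Longrightarrow> i' \<le> n \<Longrightarrow> u i' \<le> u i"
      and "\<And>j j'. 1 \<le> j \<Longrightarrow> j \<le> j' \<Longrightarrow> j' \<le> n \<Longrightarrow> v j' \<le> v j"
      and "event_a n u v eA eP"
      and "event_b n u v eA eP"
  shows "\<forall>t. \<forall>k\<in>{1..n}.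
     real (card {(i, j). i \<in> {1..n} \<and> muA (run n u v eA eP t) i = Some j \<and> k \<le> i \<and> j < k})
       \<le> 8 * log 2 (real n)"
proof (intro allI ballI)
  fix t k assume k: "k \<in> {1..n}"
  let ?s = "run n u v eA eP t"
  let ?S = "{(i, j). i \<in> {1..n} \<and> muA ?s i = Some j \<and> k \<le> i \<and> j < k}"
  have valid: "valid_matching ?s" by (rule valid_matching_run)
  show "real (card ?S) \<le> 8 * log 2 (real n)"
  proof (rule card_crossing_pairs_le)
    show "inj_on snd ?S"
      using valid unfolding valid_matching_def inj_on_def by auto
    show "0 \<le> 8 * log 2 (real n)" using k by simp
    fix i j assume "(i, j) \<in> ?S"
    moreover from this have "(i, j) \<in> interviewed ?s"
      using valid unfolding valid_matching_def by auto
    ultimately show "j < k \<and> k \<le> i \<and> real i \<le> real j + 8 * log 2 (real n)"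
      using assms(3) unfolding event_a_def by blast
  qed
qed

end
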